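(* (1) The code $\mathcal C:\mathbb{F}_q^5\to(\mathbb{F}_q^2)^5$ given by $\mathbf c_i=(x_i,\,x_{i+2}+x_{i+3})$ for $i\in[5]$ (indices modulo $5$ in $[5]$; explicitly $\mathbf c_1=(x_1,x_3+x_4)$, $\mathbf c_2=(x_2,x_4+x_5)$, $\mathbf c_3=(x_3,x_5+x_1)$, $\mathbf c_4=(x_4,x_1+x_2)$, $\mathbf c_5=(x_5,x_2+x_3)$) is a $(5,10,3,5)$-BAC. (2) The code of Construction C built from the good vector $\mathbf v=(2,3,2,4,3,1,1,4)$ (with $t=4$, $n=17$) is a $(17,85,7,17)$-BAC.
   Context: Fix a finite field $\mathbb{F}_q$. For $\mathbf v$ with $t=4$ and $j\in[4]$, $j(\mathbf v)=\max\{i:v_i=j\}$ (so $1(\mathbf v)=7$, $2(\mathbf v)=3$, $3(\mathbf v)=5$, $4(\mathbf v)=8$). Construction C with $n=17$: indices modulo $17$ in $[17]$; for $\mathbf x\in\mathbb{F}_q^{17}$, $i\in[17]$, $j\in[4]$ put $y_{i,j}=x_{i-4-j(\mathbf v)}+x_{i-4-j(\mathbf v)+j}$ and $\mathbf c_i=(x_i,y_{i,1},\dots,y_{i,4})$. An $(n,N,k,m)$-batch array code (BAC) over $\mathbb{F}_q$ is an $\mathbb{F}_q$-linear map $\mathbf x\in\mathbb{F}_q^n\mapsto(\mathbf c_1,\dots,\mathbf c_m)$ with buckets $\mathbf c_\ell\in\mathbb{F}_q^{N_\ell}$, $N_\ell\ge1$, $\sum_\ell N_\ell=N$, such that for every multiset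 $\{\{i_1,\dots,i_k\}\}$ of elements of $[n]$ there is a partition of $[m]$ into $k$ sets $R_1,\dots,R_k$ such that for each $j\in[k]$, $x_{i_j}$ is an $\mathbb{F}_q$-linear combination of values $f_\ell(\mathbf c_\ell)$, $\ell\in R_j$, for some linear functionals $f_\ell$ (independent of $\mathbf x$). *)

theory Defs
  imports Main
begin

definition modidx :: "nat \<Rightarrow> int \<Rightarrow> nat" where
  "modidx n i = nat ((i - 1) mod int n) + 1"

text \<open>A code with m buckets over F_q is given by bucket sizes Nsz l (l in [m]) and
  coordinate maps enc l r x (the r-th entry, r in [Nsz l], of bucket c_l, as a function of
  the message x, whose coordinates x 1, ..., x n are used).
  is_BAC expresses that this is an (n,N,k,m)-batch array code.\<close>
definition is_BAC ::
  "nat \<Rightarrow> nat \<Rightarrow> nat \<Rightarrow> nat \<Rightarrow> (nat \<Rightarrow> nat) \<Rightarrow> (nat \<Rightarrow> nat \<Rightarrow> (nat \<Rightarrow> 'a::field) \<Rightarrow> 'a) \<Rightarrow> bool"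
where
  "is_BAC n N k m Nsz enc \<longleftrightarrow>
     (\<forall>l\<in>{1..m}. Nsz l \<ge> 1) \<and>
     (\<Sum>l=1..m. Nsz l) = N \<and>
     \<comment> \<open>the encoding is F_q-linear in x in F_q^n\<close>
     (\<forall>l\<in>{1..m}. \<forall>r\<in>{1..Nsz l}. \<exists>g :: nat \<Rightarrow> 'a.
         \<forall>x. enc l r x = (\<Sum>i=1..n. g i * x i)) \<and>
     \<comment> \<open>every multiset of k requests (listed as a list) is served by a partition of [m]\<close>
     (\<forall>idx :: nat list. length idx = k \<and> set idx \<subseteq> {1..n} \<longrightarrow>
        (\<exists>R :: nat \<Rightarrow> nat set.
           (\<forall>j<k. R j \<subseteq> {1..m}) \<and>
           (\<forall>j<k. \<forall>j'<k. j \<noteq> j' \<longrightarrow> R j \<inter> R j' = {}) \<and>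
           (\<Union>j<k. R j) = {1..m} \<and>
           (\<forall>j<k. \<exists>a :: nat \<Rightarrow> nat \<Rightarrow> 'a.
              \<forall>x. x (idx ! j) = (\<Sum>l\<in>R j. \<Sum>r=1..Nsz l. a l r * enc l r x))))"

definition code5 :: "nat \<Rightarrow> nat \<Rightarrow> (nat \<Rightarrow> 'a::field) \<Rightarrow> 'a" where
  "code5 l r x =
     (if r = 1 then x l
      else if r = 2 then x (modidx 5 (int l + 2)) + x (modidx 5 (int l + 3))
      else 0)"

definition jv :: "nat list \<Rightarrow> nat \<Rightarrow> nat" where
  "jv v j = Max {i \<in> {1..length v}. v ! (i - 1) = j}"

definition constrC :: "nat \<Rightarrow> nat \<Rightarrow> nat list \<Rightarrow> nat \<Rightarrow> nat \<Rightarrow> (nat \<Rightarrow> 'a::field) \<Rightarrow> 'a" where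
  "constrC n t v i r x =
     (if r = 1 then x i
      else if 2 \<le> r \<and> r \<le> t + 1 then
        (let j = r - 1 in
          x (modidx n (int i - int t - int (jv v j)))
          + x (modidx n (int i - int t - int (jv v j) + int j)))
      else 0)"

end

theory Submission
  imports Defs
begin

text \<open>
  In both codes bucket \<open>l\<close> stores \<open>x l\<close> together with sums \<open>x (l + s) + x (l + s + d)\<close>,
  indices taken mod \<open>n\<close>. Such a sum lets \<open>x p\<close> be read off the two buckets \<open>p - s\<close> and
  \<open>p + d\<close>, or off \<open>p - s - d\<close> and \<open>p - d\<close>. If the offsets of all these recovery pairs are
  distinct and nonzero mod \<open>n\<close>, the \<open>P\<close> pairs of a fixed \<open>p\<close> are pairwise disjoint and avoid
  \<open>p\<close>. A request multiset of size \<open>k\<close> with \<open>d\<close> distinct elements of maximal multiplicity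
  \<open>m\<close> is served by giving the first copy of each element its own bucket and the other copies
  pairwise disjoint recovery pairs avoiding the requested buckets. Choosing these greedily, the
  most requested element last, succeeds when \<open>2 k \<le> P + d + m\<close>, and by AM-GM this follows
  from \<open>k \<le> d m\<close> as soon as \<open>(2 k - P - 1)\<^sup>2 < 4 k\<close>. Unused buckets join any recovery set.
\<close>

lemma modidx_in_range: "0 < n \<Longrightarrow> modidx n a \<in> {1..n}"
proof -
  assume "0 < n"
  then have "0 \<le> (a - 1) mod int n" "(a - 1) mod int n < int n" by simp_all
  then show ?thesis unfolding modidx_def by (simp add: Suc_le_eq nat_less_iff)
qed

lemma modidx_eq_iff: "0 < n \<Longrightarrow> modidx n a = modidx n b \<longleftrightarrow> a mod int n = b mod int n"
proof -
  assume "0 < n"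
  then have "modidx n a = modidx n b \<longleftrightarrow> (a - 1) mod int n = (b - 1) mod int n"
    unfolding modidx_def by (simp add: eq_nat_nat_iff)
  also have "\<dots> \<longleftrightarrow> a mod int n = b mod int n"
    by (simp add: mod_eq_dvd_iff)
  finally show ?thesis .
qed

lemma modidx_of_nat: "p \<in> {1..n} \<Longrightarrow> modidx n (int p) = p"
  unfolding modidx_def by auto

lemma modidx_modidx_add: "0 < n \<Longrightarrow> modidx n (int (modidx n a) + b) = modidx n (a + b)"
proof -
  assume n: "0 < n"
  then have "int (modidx n a) = (a - 1) mod int n + 1"
    unfolding modidx_def by simp
  then have "(int (modidx n a) + b) mod int n = ((a - 1) mod int n + (b + 1)) mod int n"
    by (simp add: ac_simps)
  also have "\<dots> = (a + b) mod int n"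
    by (simp add: mod_add_left_eq)
  finally show ?thesis using n by (simp add: modidx_eq_iff)
qed

lemma modidx_shift_eq_iff:
  "0 < n \<Longrightarrow> modidx n (int p + a) = modidx n (int p + b) \<longleftrightarrow> a mod int n = b mod int n"
  by (simp add: modidx_eq_iff mod_eq_dvd_iff)

lemma modidx_shift_eq_self_iff:
  "p \<in> {1..n} \<Longrightarrow> modidx n (int p + a) = p \<longleftrightarrow> a mod int n = 0"
  using modidx_shift_eq_iff[of n p a 0] modidx_of_nat[of p n] by auto

lemma coordinate_linear:
  fixes i n :: nat
  assumes "i \<in> {1..n}"
  shows "\<exists>g. \<forall>x. (x i :: 'a::field) = (\<Sum>l=1..n. g l * x l)"
proof (intro exI allI)
  fix x :: "nat \<Rightarrow> 'a"
  show "x i = (\<Sum>l=1..n. (if l = i then 1 else 0) * x l)"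
    using assms by (simp add: if_distrib[of "\<lambda>c. c * _"] cong: if_cong)
qed

lemma linear_add:
  fixes f f' :: "(nat \<Rightarrow> 'a::field) \<Rightarrow> 'a"
  assumes "\<exists>g. \<forall>x. f x = (\<Sum>l=1..n. g l * x l)" "\<exists>g. \<forall>x. f' x = (\<Sum>l=1..n. g l * x l)"
  shows "\<exists>g. \<forall>x. f x + f' x = (\<Sum>l=1..n. g l * x l)"
proof -
  obtain g g' where "\<forall>x. f x = (\<Sum>l=1..n. g l * x l)" "\<forall>x. f' x = (\<Sum>l=1..n. g' l * x l)"
    using assms by blast
  then have "\<forall>x. f x + f' x = (\<Sum>l=1..n. (g l + g' l) * x l)"
    by (simp add: distrib_right sum.distrib)
  then show ?thesis
    by (rule exI[of _ "\<lambda>l. g l + g' l"])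
qed

definition recovers ::
  "(nat \<Rightarrow> nat) \<Rightarrow> (nat \<Rightarrow> nat \<Rightarrow> (nat \<Rightarrow> 'a::field) \<Rightarrow> 'a) \<Rightarrow> nat set \<Rightarrow> nat \<Rightarrow> bool"
where
  "recovers Nsz enc S p \<longleftrightarrow> (\<exists>a. \<forall>x. x p = (\<Sum>l\<in>S. \<Sum>r=1..Nsz l. a l r * enc l r x))"

lemma sum_entry_indicator:
  fixes enc :: "nat \<Rightarrow> nat \<Rightarrow> (nat \<Rightarrow> 'a::field) \<Rightarrow> 'a"
  assumes "finite S" "i \<in> S" "r \<in> {1..Nsz i}"
  shows "(\<Sum>l\<in>S. \<Sum>\<rho>=1..Nsz l. (if l = i \<and> \<rho> = r then c else 0) * enc l \<rho> x) = c * enc i r x"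
proof -
  have "(\<Sum>\<rho>=1..Nsz l. (if l = i \<and> \<rho> = r then c else 0) * enc l \<rho> x)
      = (if l = i then c * enc i r x else 0)" for l
  proof -
    have "(\<Sum>\<rho>=1..Nsz l. (if l = i \<and> \<rho> = r then c else 0) * enc l \<rho> x)
        = (\<Sum>\<rho>=1..Nsz l. if l = i \<and> \<rho> = r then c * enc i r x else 0)"
      by (rule sum.cong) auto
    also have "\<dots> = (if l = i then c * enc i r x else 0)"
      using assms(3) by (cases "l = i") (simp_all add: sum.delta')
    finally show ?thesis .
  qed
  then show ?thesis using assms(1,2) by (simp add: sum.delta')
qed

lemma recovers_entry:
  fixes enc :: "nat \<Rightarrow> nat \<Rightarrow> (nat \<Rightarrow> 'a::field) \<Rightarrow> 'a"
  assumes "r \<in> {1..Nsz p}" "\<And>x. enc p r x = x p"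
  shows "recovers Nsz enc {p} p"
  unfolding recovers_def
proof (intro exI allI)
  fix x :: "nat \<Rightarrow> 'a"
  show "x p = (\<Sum>l\<in>{p}. \<Sum>\<rho>=1..Nsz l. (if l = p \<and> \<rho> = r then 1 else 0) * enc l \<rho> x)"
    using sum_entry_indicator[of "{p}" p r Nsz 1 enc x] assms by simp
qed

lemma recovers_entry_diff:
  fixes enc :: "nat \<Rightarrow> nat \<Rightarrow> (nat \<Rightarrow> 'a::field) \<Rightarrow> 'a"
  assumes "i \<noteq> j" "r \<in> {1..Nsz i}" "r' \<in> {1..Nsz j}" "\<And>x. enc i r x - enc j r' x = x p"
  shows "recovers Nsz enc {i, j} p"
  unfolding recovers_def
proof (intro exI allI)
  fix x :: "nat \<Rightarrow> 'a"
  let ?a = "\<lambda>l \<rho>. (if l = i \<and> \<rho> = r then 1 else 0) + (if l = j \<and> \<rho> = r' then -1 else 0)"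
  have "(\<Sum>l\<in>{i, j}. \<Sum>\<rho>=1..Nsz l. ?a l \<rho> * enc l \<rho> x)
      = 1 * enc i r x + (-1) * enc j r' x"
    unfolding distrib_right sum.distrib
    using sum_entry_indicator[of "{i, j}" i r Nsz 1 enc x]
      sum_entry_indicator[of "{i, j}" j r' Nsz "-1" enc x] assms(2,3) by simp
  then show "x p = (\<Sum>l\<in>{i, j}. \<Sum>\<rho>=1..Nsz l. ?a l \<rho> * enc l \<rho> x)"
    using assms(4)[of x] by simp
qed

lemma recovers_mono:
  fixes enc :: "nat \<Rightarrow> nat \<Rightarrow> (nat \<Rightarrow> 'a::field) \<Rightarrow> 'a"
  assumes "recovers Nsz enc S p" "S \<subseteq> T" "finite T"
  shows "recovers Nsz enc T p"
proof -
  obtain a where a: "\<And>x. x p = (\<Sum>l\<in>S. \<Sum>r=1..Nsz l. a l r * enc l r x)"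
    using assms(1) unfolding recovers_def by blast
  let ?a = "\<lambda>l r. if l \<in> S then a l r else 0"
  have sums: "(\<Sum>l\<in>T. \<Sum>r=1..Nsz l. ?a l r * enc l r x) = (\<Sum>l\<in>S. \<Sum>r=1..Nsz l. a l r * enc l r x)"
    for x by (rule sum.mono_neutral_cong_right[OF assms(3,2)]) simp_all
  show ?thesis
    unfolding recovers_def by (rule exI[of _ ?a]) (simp only: sums a[symmetric] simp_thms)
qed

lemma card_meeting_disjoint_family_le:
  assumes "finite U" "\<And>k k'. k \<in> I \<Longrightarrow> k' \<in> I \<Longrightarrow> k \<noteq> k' \<Longrightarrow> F k \<inter> F k' = {}"
  shows "card {k\<in>I. F k \<inter> U \<noteq> {}} \<le> card U"
proof -
  let ?B = "{k\<in>I. F k \<inter> U \<noteq> {}}"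
  define w where "w k = (SOME u. u \<in> F k \<inter> U)" for k
  have w: "w k \<in> F k \<inter> U" if "k \<in> ?B" for k
    using that unfolding w_def by (metis (mono_tags, lifting) ex_in_conv mem_Collect_eq someI_ex)
  have "inj_on w ?B"
  proof (rule inj_onI)
    fix k k' assume k: "k \<in> ?B" and k': "k' \<in> ?B" and "w k = w k'"
    then have "w k \<in> F k \<inter> F k'" using w[OF k] w[OF k'] by simp
    then show "k = k'" using assms(2) k k' by blast
  qed
  moreover have "w ` ?B \<subseteq> U"
    using w by blast
  ultimately show ?thesis
    using assms(1) by (rule card_inj_on_le)
qed

lemma obtain_disjoint_family_subset_avoiding:
  assumes "finite U" "finite I" "\<And>k k'. k \<in> I \<Longrightarrow> k' \<in> I \<Longrightarrow> k \<noteq> k' \<Longrightarrow> F k \<inter> F k' = {}"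
    and "card U + m \<le> card I"
  obtains J where "J \<subseteq> I" "card J = m" "\<forall>k\<in>J. F k \<inter> U = {}"
proof -
  let ?B = "{k\<in>I. F k \<inter> U \<noteq> {}}"
  have "card ?B \<le> card U"
    using assms(1,3) by (rule card_meeting_disjoint_family_le)
  moreover have "card (I - ?B) = card I - card ?B"
    using assms(2) by (intro card_Diff_subset) auto
  ultimately have "m \<le> card (I - ?B)"
    using assms(4) by linarith
  then obtain J where "J \<subseteq> I - ?B" "card J = m"
    by (meson obtain_subset_with_card_n)
  then show ?thesis
    using that by blast
qed

text \<open>\<open>K p\<close> chooses the recovery pairs for the \<open>c p - 1\<close> copies of \<open>p\<close> that bucket \<open>p\<close>
  itself cannot serve.\<close>

definition disjoint_pair_selection ::
  "(nat \<Rightarrow> 'i \<Rightarrow> nat set) \<Rightarrow> nat set \<Rightarrow> 'i set \<Rightarrow> (nat \<Rightarrow> nat) \<Rightarrow> nat set \<Rightarrow>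
    (nat \<Rightarrow> 'i set) \<Rightarrow> bool"
where
  "disjoint_pair_selection pr Z I c D K \<longleftrightarrow>
     (\<forall>p\<in>D. K p \<subseteq> I \<and> card (K p) = c p - 1) \<and> (\<forall>p\<in>D. \<forall>q\<in>K p. pr p q \<inter> Z = {}) \<and>
     (\<forall>p\<in>D. \<forall>p'\<in>D. \<forall>q\<in>K p. \<forall>q'\<in>K p'. (p, q) \<noteq> (p', q') \<longrightarrow> pr p q \<inter> pr p' q' = {})"

lemma card_selected_pairs_le:
  assumes sel: "disjoint_pair_selection pr Z I c S K" and "finite S" "finite I" "\<forall>p\<in>S. 1 \<le> c p"
    and card_pr: "\<forall>p\<in>S. \<forall>q\<in>I. card (pr p q) = 2"
  shows "finite (\<Union>p\<in>S. \<Union>q\<in>K p. pr p q)"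
    and "card (\<Union>p\<in>S. \<Union>q\<in>K p. pr p q) + 2 * card S \<le> 2 * sum c S"
proof -
  have K: "K p \<subseteq> I" "card (K p) = c p - 1" if "p \<in> S" for p
    using sel that unfolding disjoint_pair_selection_def by auto
  have finite_K: "finite (K p)" if "p \<in> S" for p
    using K(1)[OF that] \<open>finite I\<close> by (rule finite_subset)
  have "finite (pr p q)" if "p \<in> S" "q \<in> K p" for p q
  proof -
    have "q \<in> I" using K(1) that by blast
    then show ?thesis using card_pr that(1) by (intro card_ge_0_finite) simp
  qed
  then show "finite (\<Union>p\<in>S. \<Union>q\<in>K p. pr p q)"
    using \<open>finite S\<close> finite_K by simp
  have "card (\<Union>p\<in>S. \<Union>q\<in>K p. pr p q) \<le> (\<Sum>p\<in>S. card (\<Union>q\<in>K p. pr p q))"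
    using \<open>finite S\<close> by (rule card_UN_le)
  also have "\<dots> \<le> (\<Sum>p\<in>S. \<Sum>q\<in>K p. card (pr p q))"
    by (intro sum_mono card_UN_le finite_K)
  also have "\<dots> = 2 * (\<Sum>p\<in>S. c p - 1)"
  proof -
    have "(\<Sum>q\<in>K p. card (pr p q)) = 2 * (c p - 1)" if "p \<in> S" for p
    proof -
      have "(\<Sum>q\<in>K p. card (pr p q)) = (\<Sum>q\<in>K p. 2)"
        using K(1)[OF that] card_pr that by (intro sum.cong) auto
      then show ?thesis using K(2)[OF that] by simp
    qed
    then show ?thesis
      unfolding sum_distrib_left by (rule sum.cong[OF refl])
  qed
  also have "\<dots> = 2 * sum c S - 2 * card S"
  proof -
    have "sum c S = (\<Sum>p\<in>S. (c p - 1) + 1)"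
      using assms(4) by (intro sum.cong) auto
    then show ?thesis
      by (simp only: sum.distrib card_eq_sum) simp
  qed
  finally show "card (\<Union>p\<in>S. \<Union>q\<in>K p. pr p q) + 2 * card S \<le> 2 * sum c S"
    using sum_mono[of S "\<lambda>_. 1" c] assms(4) by simp
qed

lemma disjoint_pair_selection_insert:
  assumes sel: "disjoint_pair_selection pr Z I c S K" and "x \<notin> S"
    and self_free: "\<And>q. q \<in> I \<Longrightarrow> x \<notin> pr x q"
    and pr_disj: "\<And>q q'. q \<in> I \<Longrightarrow> q' \<in> I \<Longrightarrow> q \<noteq> q' \<Longrightarrow> pr x q \<inter> pr x q' = {}"
    and F: "F \<subseteq> I" "card F = c x - 1"
    and F_free: "\<And>q. q \<in> F \<Longrightarrow> pr x q \<inter> ((Z - {x}) \<union> (\<Union>p\<in>S. \<Union>q\<in>K p. pr p q)) = {}"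
  shows "disjoint_pair_selection pr Z I c (insert x S) (K(x := F))"
proof -
  have K: "\<forall>p\<in>S. K p \<subseteq> I \<and> card (K p) = c p - 1"
    and K_Z: "\<forall>p\<in>S. \<forall>q\<in>K p. pr p q \<inter> Z = {}"
    and K_disj: "\<forall>p\<in>S. \<forall>p'\<in>S. \<forall>q\<in>K p. \<forall>q'\<in>K p'. (p, q) \<noteq> (p', q') \<longrightarrow> pr p q \<inter> pr p' q' = {}"
    using sel unfolding disjoint_pair_selection_def by blast+
  have F_Z: "pr x q \<inter> Z = {}" if "q \<in> F" for q
    using F_free[OF that] self_free F(1) that by blast
  have F_K: "pr x q \<inter> pr p q' = {}" if "q \<in> F" "p \<in> S" "q' \<in> K p" for p q q'
    using F_free[OF that(1)] that(2,3) by blast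
  have disj: "pr p q \<inter> pr p' q' = {}"
    if "p \<in> insert x S" "p' \<in> insert x S" "q \<in> (K(x := F)) p" "q' \<in> (K(x := F)) p'"
      and "(p, q) \<noteq> (p', q')" for p p' q q'
    using that \<open>x \<notin> S\<close> pr_disj[of q q'] F(1) F_K[of q p' q'] F_K[of q' p q] K_disj
    by (auto split: if_splits)
  show ?thesis
    unfolding disjoint_pair_selection_def
    using K K_Z F F_Z disj \<open>x \<notin> S\<close> by (auto split: if_splits)
qed

lemma disjoint_pair_selection_extend:
  fixes pr :: "nat \<Rightarrow> 'i \<Rightarrow> nat set" and c :: "nat \<Rightarrow> nat"
  assumes "finite Z" "finite I"
    and pr_card: "\<And>p q. p \<in> Z \<Longrightarrow> q \<in> I \<Longrightarrow> card (pr p q) = 2 \<and> p \<notin> pr p q"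
    and pr_disj: "\<And>p q q'. p \<in> Z \<Longrightarrow> q \<in> I \<Longrightarrow> q' \<in> I \<Longrightarrow> q \<noteq> q' \<Longrightarrow> pr p q \<inter> pr p q' = {}"
    and K: "disjoint_pair_selection pr Z I c S K" and "finite S" "S \<subseteq> Z" "\<forall>p\<in>S. 1 \<le> c p"
    and x: "x \<in> Z" "x \<notin> S" "1 \<le> c x"
    and bound: "card Z + 2 * c x + 2 * sum c S \<le> card I + 2 * card S + 2 + c x"
  shows "\<exists>K'. disjoint_pair_selection pr Z I c (insert x S) K'"
proof -
  define U where "U = (Z - {x}) \<union> (\<Union>p\<in>S. \<Union>q\<in>K p. pr p q)"
  have U_finite: "finite U" and U_card: "card U + (c x - 1) \<le> card I"
  proof -
    have "\<forall>p\<in>S. \<forall>q\<in>I. card (pr p q) = 2"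
      using pr_card \<open>S \<subseteq> Z\<close> by blast
    note used = card_selected_pairs_le[OF K \<open>finite S\<close> assms(2) \<open>\<forall>p\<in>S. 1 \<le> c p\<close> this]
    show "finite U"
      unfolding U_def using assms(1) used(1) by simp
    have "card U \<le> card (Z - {x}) + card (\<Union>p\<in>S. \<Union>q\<in>K p. pr p q)"
      unfolding U_def by (rule card_Un_le)
    then have "card U \<le> card Z - 1 + card (\<Union>p\<in>S. \<Union>q\<in>K p. pr p q)"
      by (simp add: card_Diff_singleton[OF x(1)])
    moreover have "0 < card Z"
      using x(1) assms(1) card_gt_0_iff by blast
    ultimately show "card U + (c x - 1) \<le> card I"
      using bound used(2) x(3) by linarith
  qed
  obtain F where F: "F \<subseteq> I" "card F = c x - 1" "\<forall>q\<in>F. pr x q \<inter> U = {}"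
    using U_finite assms(2) pr_disj[OF x(1)] U_card by (rule obtain_disjoint_family_subset_avoiding) blast
  have "disjoint_pair_selection pr Z I c (insert x S) (K(x := F))"
  proof (rule disjoint_pair_selection_insert[OF K x(2)])
    show "x \<notin> pr x q" if "q \<in> I" for q
      using pr_card[OF x(1) that] by blast
    show "pr x q \<inter> pr x q' = {}" if "q \<in> I" "q' \<in> I" "q \<noteq> q'" for q q'
      using pr_disj[OF x(1) that] .
  qed (use F in \<open>simp_all add: U_def\<close>)
  then show ?thesis by blast
qed

lemma exists_disjoint_pair_selection:
  fixes pr :: "nat \<Rightarrow> 'i \<Rightarrow> nat set" and c :: "nat \<Rightarrow> nat"
  assumes "finite Z" "finite I"
    and pr_card: "\<And>p q. p \<in> Z \<Longrightarrow> q \<in> I \<Longrightarrow> card (pr p q) = 2 \<and> p \<notin> pr p q"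
    and pr_disj: "\<And>p q q'. p \<in> Z \<Longrightarrow> q \<in> I \<Longrightarrow> q' \<in> I \<Longrightarrow> q \<noteq> q' \<Longrightarrow> pr p q \<inter> pr p q' = {}"
    and "finite D" "D \<subseteq> Z" "\<forall>p\<in>D. 1 \<le> c p"
    and "D \<noteq> {} \<Longrightarrow> card Z + 2 * sum c D \<le> card I + 2 * card D + Max (c ` D)"
  shows "\<exists>K. disjoint_pair_selection pr Z I c D K"
  using assms(5-)
proof (induction D rule: finite_ranking_induct[where f = c])
  \<comment> \<open>the element added in each step has the largest multiplicity so far\<close>
  case empty
  then show ?case by (simp add: disjoint_pair_selection_def)
next
  case (insert x S)
  show ?case
  proof (cases "x \<in> S")
    case True
    then have S_eq: "insert x S = S" by (rule insert_absorb)
    show ?thesis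
      unfolding S_eq by (rule insert.IH) (use insert.prems in \<open>simp_all add: S_eq\<close>)
  next
    case False
    have "x \<in> Z" "S \<subseteq> Z" "1 \<le> c x" "\<forall>p\<in>S. 1 \<le> c p"
      using insert.prems by auto
    have "Max (c ` insert x S) = c x"
      by (rule Max_eqI) (use insert.hyps in auto)
    then have bound: "card Z + 2 * c x + 2 * sum c S \<le> card I + 2 * card S + 2 + c x"
      using insert.prems(3) insert.hyps(1) False by simp
    have "card Z + 2 * sum c S \<le> card I + 2 * card S + Max (c ` S)" if "S \<noteq> {}"
    proof -
      from that obtain y where "y \<in> S" by blast
      then have "1 \<le> Max (c ` S)"
        using \<open>\<forall>p\<in>S. 1 \<le> c p\<close> insert.hyps(1) by (meson Max_ge finite_imageI image_eqI le_trans)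
      then show ?thesis using bound \<open>1 \<le> c x\<close> by linarith
    qed
    then obtain K where K: "disjoint_pair_selection pr Z I c S K"
      using insert.IH[OF \<open>S \<subseteq> Z\<close> \<open>\<forall>p\<in>S. 1 \<le> c p\<close>] by blast
    show ?thesis
      by (rule disjoint_pair_selection_extend; fact assms(1,2) pr_card pr_disj K insert.hyps(1) bound
          \<open>x \<in> Z\<close> \<open>x \<notin> S\<close> \<open>1 \<le> c x\<close> \<open>S \<subseteq> Z\<close> \<open>\<forall>p\<in>S. 1 \<le> c p\<close>)
  qed
qed

lemma count_list_take_mono:
  assumes "k \<le> k'"
  shows "count_list (take k xs) a \<le> count_list (take k' xs) a"
proof -
  have "take k' xs = take k xs @ drop k (take k' xs)"
    using append_take_drop_id[of k "take k' xs"] assms by (simp add: min_absorb1)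
  then show ?thesis
    by (metis count_list_append le_add1)
qed

lemma count_list_take_Suc_nth:
  "j < length xs \<Longrightarrow> count_list (take (Suc j) xs) (xs ! j) = Suc (count_list (take j xs) (xs ! j))"
  by (simp add: take_Suc_conv_app_nth)

lemma count_list_take_nth_less:
  assumes "j < length xs"
  shows "count_list (take j xs) (xs ! j) < count_list xs (xs ! j)"
  using count_list_take_Suc_nth[OF assms] count_list_take_mono[of "Suc j" "length xs" xs "xs ! j"] assms
  by simp

lemma count_list_take_nth_strict_mono:
  assumes "j < j'" "j' < length xs" "xs ! j = xs ! j'"
  shows "count_list (take j xs) (xs ! j) < count_list (take j' xs) (xs ! j')"
  using count_list_take_Suc_nth[of j xs] count_list_take_mono[of "Suc j" j' xs "xs ! j"] assms
  by simp

lemma inj_on_nth_count_list_take: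
  "inj_on (\<lambda>j. (xs ! j, count_list (take j xs) (xs ! j))) {..<length xs}"
proof (rule inj_onI)
  fix j j' assume "j \<in> {..<length xs}" "j' \<in> {..<length xs}"
    and eq: "(xs ! j, count_list (take j xs) (xs ! j)) = (xs ! j', count_list (take j' xs) (xs ! j'))"
  then show "j = j'"
    using count_list_take_nth_strict_mono[of j j' xs] count_list_take_nth_strict_mono[of j' j xs]
    by (metis lessThan_iff nat_neq_iff prod.inject)
qed

lemma length_le_card_set_mult_Max_count:
  "length xs \<le> card (set xs) * Max (count_list xs ` set xs)"
proof -
  have "length xs = (\<Sum>p\<in>set xs. count_list xs p)"
    by (simp add: sum_count_set)
  also have "\<dots> \<le> card (set xs) * Max (count_list xs ` set xs)"
    using sum_bounded_above[of "set xs" "count_list xs" "Max (count_list xs ` set xs)"] by simp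
  finally show ?thesis .
qed

text \<open>The copy number \<open>r\<close> (counted from 0) of a requested \<open>p\<close> is served by bucket \<open>p\<close>
  itself if \<open>r = 0\<close>, and by the selected pair \<open>e p (r - 1)\<close> otherwise.\<close>

definition serving_set ::
  "(nat \<Rightarrow> 'i \<Rightarrow> nat set) \<Rightarrow> (nat \<Rightarrow> nat \<Rightarrow> 'i) \<Rightarrow> nat \<Rightarrow> nat \<Rightarrow> nat set"
where
  "serving_set pr e p r = (if r = 0 then {p} else pr p (e p (r - 1)))"

lemma serving_set_disjoint:
  assumes sel: "disjoint_pair_selection pr D I c D K"
    and e: "\<forall>p\<in>D. bij_betw (e p) {0..<c p - 1} (K p)"
    and p: "p \<in> D" and p': "p' \<in> D" and r: "r < c p" and r': "r' < c p'"
    and ne: "(p, r) \<noteq> (p', r')"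
  shows "serving_set pr e p r \<inter> serving_set pr e p' r' = {}"
proof -
  have K_D: "\<forall>p\<in>D. \<forall>q\<in>K p. pr p q \<inter> D = {}"
    and K_disj: "\<forall>p\<in>D. \<forall>p'\<in>D. \<forall>q\<in>K p. \<forall>q'\<in>K p'. (p, q) \<noteq> (p', q') \<longrightarrow> pr p q \<inter> pr p' q' = {}"
    using sel unfolding disjoint_pair_selection_def by blast+
  have e_in: "e p (r - 1) \<in> K p" if "p \<in> D" "0 < r" "r < c p" for p r
    using bij_betw_apply[OF e[rule_format, OF that(1)]] that(2,3) by simp
  show ?thesis
  proof (cases "r = 0"; cases "r' = 0")
    assume "r = 0" "r' = 0"
    then show ?thesis using ne unfolding serving_set_def by auto
  next
    assume "r = 0" "r' \<noteq> 0"
    then show ?thesis using K_D e_in[OF p' _ r'] p p' unfolding serving_set_def by auto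
  next
    assume "r \<noteq> 0" "r' = 0"
    then show ?thesis using K_D e_in[OF p _ r] p p' unfolding serving_set_def by auto
  next
    assume r0: "r \<noteq> 0" and r'0: "r' \<noteq> 0"
    have "(p, e p (r - 1)) \<noteq> (p', e p' (r' - 1))"
    proof
      assume eq: "(p, e p (r - 1)) = (p', e p' (r' - 1))"
      then have "r - 1 = r' - 1"
        using bij_betw_imp_inj_on[OF e[rule_format, OF p]] r r' r0 r'0
        by (auto dest: inj_onD)
      then show False using eq ne r0 r'0 by simp
    qed
    then show ?thesis
      using K_disj e_in[OF p _ r] e_in[OF p' _ r'] p p' r0 r'0 unfolding serving_set_def by auto
  qed
qed

lemma obtain_enumerated_pair_selection:
  fixes pr :: "nat \<Rightarrow> 'i \<Rightarrow> nat set" and xs :: "nat list"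
  assumes "finite I"
    and pr_card: "\<And>p q. p \<in> set xs \<Longrightarrow> q \<in> I \<Longrightarrow> card (pr p q) = 2 \<and> p \<notin> pr p q"
    and pr_disj: "\<And>p q q'. p \<in> set xs \<Longrightarrow> q \<in> I \<Longrightarrow> q' \<in> I \<Longrightarrow> q \<noteq> q' \<Longrightarrow> pr p q \<inter> pr p q' = {}"
    and bound: "xs \<noteq> [] \<Longrightarrow> 2 * length xs \<le> card I + card (set xs) + Max (count_list xs ` set xs)"
  obtains K e where "disjoint_pair_selection pr (set xs) I (count_list xs) (set xs) K"
    "\<forall>p\<in>set xs. bij_betw (e p) {0..<count_list xs p - 1} (K p)"
proof -
  let ?D = "set xs" and ?c = "count_list xs"
  have "sum ?c ?D = length xs"
    by (simp add: sum_count_set)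
  then have bound_D: "?D \<noteq> {} \<Longrightarrow> card ?D + 2 * sum ?c ?D \<le> card I + 2 * card ?D + Max (?c ` ?D)"
    using bound by simp
  have c_pos: "\<forall>p\<in>?D. 1 \<le> ?c p"
  proof
    fix p assume "p \<in> ?D"
    then have "?c p \<noteq> 0" by (simp add: count_list_0_iff)
    then show "1 \<le> ?c p" by simp
  qed
  have "\<exists>K. disjoint_pair_selection pr ?D I ?c ?D K"
    by (rule exists_disjoint_pair_selection; (fact assms(1) pr_card pr_disj c_pos bound_D | simp))
  then obtain K where K: "disjoint_pair_selection pr ?D I ?c ?D K"
    by blast
  have "\<forall>p\<in>?D. \<exists>e. bij_betw e {0..<?c p - 1} (K p)"
  proof
    fix p assume "p \<in> ?D"
    then have "K p \<subseteq> I" "card (K p) = ?c p - 1"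
      using K unfolding disjoint_pair_selection_def by auto
    moreover from \<open>K p \<subseteq> I\<close> have "finite (K p)"
      using assms(1) by (rule finite_subset)
    ultimately show "\<exists>e. bij_betw e {0..<?c p - 1} (K p)"
      using ex_bij_betw_nat_finite[of "K p"] by simp
  qed
  then obtain e where "\<forall>p\<in>?D. bij_betw (e p) {0..<?c p - 1} (K p)"
    by (rule bchoice[THEN exE])
  with K show ?thesis
    by (rule that)
qed

lemma exists_disjoint_serving_sets:
  fixes pr :: "nat \<Rightarrow> 'i \<Rightarrow> nat set" and xs :: "nat list"
  assumes "finite I"
    and pr_card: "\<And>p q. p \<in> set xs \<Longrightarrow> q \<in> I \<Longrightarrow> card (pr p q) = 2 \<and> p \<notin> pr p q"
    and pr_disj: "\<And>p q q'. p \<in> set xs \<Longrightarrow> q \<in> I \<Longrightarrow> q' \<in> I \<Longrightarrow> q \<noteq> q' \<Longrightarrow> pr p q \<inter> pr p q' = {}"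
    and bound: "xs \<noteq> [] \<Longrightarrow> 2 * length xs \<le> card I + card (set xs) + Max (count_list xs ` set xs)"
  shows "\<exists>S. (\<forall>j<length xs. S j = {xs ! j} \<or> (\<exists>q\<in>I. S j = pr (xs ! j) q)) \<and>
    (\<forall>j<length xs. \<forall>j'<length xs. j \<noteq> j' \<longrightarrow> S j \<inter> S j' = {})"
proof -
  obtain K e where K: "disjoint_pair_selection pr (set xs) I (count_list xs) (set xs) K"
    and e: "\<forall>p\<in>set xs. bij_betw (e p) {0..<count_list xs p - 1} (K p)"
    using assms(1) pr_card pr_disj bound by (rule obtain_enumerated_pair_selection)
  define rk where "rk j = count_list (take j xs) (xs ! j)" for j
  have rk_less: "rk j < count_list xs (xs ! j)" if "j < length xs" for j
    unfolding rk_def using that by (rule count_list_take_nth_less)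
  show ?thesis
  proof (intro exI[of _ "\<lambda>j. serving_set pr e (xs ! j) (rk j)"] conjI allI impI)
    fix j assume j: "j < length xs"
    have "e (xs ! j) (rk j - 1) \<in> I" if "rk j \<noteq> 0"
    proof -
      have "e (xs ! j) (rk j - 1) \<in> K (xs ! j)"
        using bij_betw_apply[OF e[rule_format, OF nth_mem[OF j]]] rk_less[OF j] that by simp
      then show ?thesis
        using K nth_mem[OF j] unfolding disjoint_pair_selection_def by blast
    qed
    then show "serving_set pr e (xs ! j) (rk j) = {xs ! j} \<or>
        (\<exists>q\<in>I. serving_set pr e (xs ! j) (rk j) = pr (xs ! j) q)"
      unfolding serving_set_def by auto
  next
    fix j j' assume "j < length xs" "j' < length xs" "j \<noteq> j'"
    moreover have "(xs ! j, rk j) \<noteq> (xs ! j', rk j')"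
      using inj_on_nth_count_list_take[of xs] calculation unfolding rk_def inj_on_def by blast
    ultimately show "serving_set pr e (xs ! j) (rk j) \<inter> serving_set pr e (xs ! j') (rk j') = {}"
      using serving_set_disjoint[OF K e] rk_less by simp
  qed
qed

lemma obtain_partition_extending:
  assumes "0 < k" "\<forall>j<k. S j \<subseteq> A" "\<forall>j<k. \<forall>j'<k. j \<noteq> j' \<longrightarrow> S j \<inter> S j' = {}"
  obtains R where "\<forall>j<k. S j \<subseteq> R j \<and> R j \<subseteq> A" "\<forall>j<k. \<forall>j'<k. j \<noteq> j' \<longrightarrow> R j \<inter> R j' = {}"
    "(\<Union>j<k. R j) = A"
proof -
  define R where "R j = (if j = 0 then S 0 \<union> (A - (\<Union>i<k. S i)) else S j)" for j
  have "A \<subseteq> (\<Union>j<k. R j)"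
  proof
    fix u assume "u \<in> A"
    show "u \<in> (\<Union>j<k. R j)"
    proof (cases "\<exists>i<k. u \<in> S i")
      case True
      then obtain i where "i < k" "u \<in> S i" by blast
      moreover from \<open>u \<in> S i\<close> have "u \<in> R i"
        unfolding R_def by auto
      ultimately show ?thesis by blast
    next
      case False
      then have "u \<in> R 0"
        using \<open>u \<in> A\<close> unfolding R_def by auto
      with \<open>0 < k\<close> show ?thesis by blast
    qed
  qed
  moreover have sub: "\<forall>j<k. S j \<subseteq> R j \<and> R j \<subseteq> A"
    using assms(2) unfolding R_def by auto
  moreover have "\<forall>j<k. \<forall>j'<k. j \<noteq> j' \<longrightarrow> R j \<inter> R j' = {}"
    using assms(3) unfolding R_def by auto
  ultimately show ?thesis
    using that[of R] by blast
qed

lemma is_BAC_intro: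
  fixes enc :: "nat \<Rightarrow> nat \<Rightarrow> (nat \<Rightarrow> 'a::field) \<Rightarrow> 'a"
  assumes "\<forall>l\<in>{1..m}. 1 \<le> Nsz l" "(\<Sum>l=1..m. Nsz l) = N"
    and "\<forall>l\<in>{1..m}. \<forall>r\<in>{1..Nsz l}. \<exists>g. \<forall>x. enc l r x = (\<Sum>i=1..n. g i * x i)"
    and "0 < k"
    and serve: "\<And>xs. length xs = k \<Longrightarrow> set xs \<subseteq> {1..n} \<Longrightarrow>
      \<exists>S. (\<forall>j<k. S j \<subseteq> {1..m} \<and> recovers Nsz enc (S j) (xs ! j)) \<and>
        (\<forall>j<k. \<forall>j'<k. j \<noteq> j' \<longrightarrow> S j \<inter> S j' = {})"
  shows "is_BAC n N k m Nsz enc"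
  unfolding is_BAC_def recovers_def[symmetric]
proof (intro conjI assms(1-3) allI impI)
  fix xs :: "nat list"
  assume xs: "length xs = k \<and> set xs \<subseteq> {1..n}"
  obtain S where S: "\<forall>j<k. S j \<subseteq> {1..m} \<and> recovers Nsz enc (S j) (xs ! j)"
    and S_disj: "\<forall>j<k. \<forall>j'<k. j \<noteq> j' \<longrightarrow> S j \<inter> S j' = {}"
    using serve[OF conjunct1[OF xs] conjunct2[OF xs]] by blast
  have S_sub: "\<forall>j<k. S j \<subseteq> {1..m}"
    using S by blast
  obtain R where R: "\<forall>j<k. S j \<subseteq> R j \<and> R j \<subseteq> {1..m}"
    and R_disj: "\<forall>j<k. \<forall>j'<k. j \<noteq> j' \<longrightarrow> R j \<inter> R j' = {}" and R_Union: "(\<Union>j<k. R j) = {1..m}"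
    using \<open>0 < k\<close> S_sub S_disj by (rule obtain_partition_extending)
  have R_rec: "recovers Nsz enc (R j) (xs ! j)" if "j < k" for j
  proof -
    from S R that have rec: "recovers Nsz enc (S j) (xs ! j)"
      and "S j \<subseteq> R j" "R j \<subseteq> {1..m}"
      by auto
    then show ?thesis
      using recovers_mono[OF rec] finite_subset[OF _ finite_atLeastAtMost] by blast
  qed
  show "\<exists>R. (\<forall>j<k. R j \<subseteq> {1..m}) \<and> (\<forall>j<k. \<forall>j'<k. j \<noteq> j' \<longrightarrow> R j \<inter> R j' = {}) \<and>
      \<Union> (R ` {..<k}) = {1..m} \<and> (\<forall>j<k. recovers Nsz enc (R j) (xs ! j))"
    using R R_disj R_Union R_rec by (intro exI[of _ R]) simp
qed

definition pair_sum_code ::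
  "nat \<Rightarrow> nat \<Rightarrow> (nat \<Rightarrow> int \<times> int) \<Rightarrow> (nat \<Rightarrow> nat \<Rightarrow> (nat \<Rightarrow> 'a::field) \<Rightarrow> 'a) \<Rightarrow> bool"
where
  "pair_sum_code n N off enc \<longleftrightarrow> (\<forall>l x. enc l 1 x = x l) \<and>
     (\<forall>r\<in>{2..N}. \<forall>l x. enc l r x =
        x (modidx n (int l + fst (off r))) + x (modidx n (int l + fst (off r) + snd (off r))))"

text \<open>The entry \<open>x (l + s) + x (l + s + d)\<close> of every bucket \<open>l\<close> yields \<open>x p\<close> from the two
  buckets at offsets \<open>(- s, d)\<close>, or at offsets \<open>(- s - d, - d)\<close>, from \<open>p\<close>.\<close>

definition recovery_offsets :: "(int \<times> int) set \<Rightarrow> (int \<times> int) set" where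
  "recovery_offsets E = (\<lambda>(s, d). (- s, d)) ` E \<union> (\<lambda>(s, d). (- s - d, - d)) ` E"

definition cyclic_pair :: "nat \<Rightarrow> nat \<Rightarrow> int \<times> int \<Rightarrow> nat set" where
  "cyclic_pair n p q = {modidx n (int p + fst q), modidx n (int p + snd q)}"

definition residue_pair :: "nat \<Rightarrow> int \<times> int \<Rightarrow> int set" where
  "residue_pair n q = {fst q mod int n, snd q mod int n}"

definition separated_offsets :: "nat \<Rightarrow> (int \<times> int) set \<Rightarrow> bool" where
  "separated_offsets n Q \<longleftrightarrow>
     (\<forall>q\<in>Q. card (residue_pair n q) = 2 \<and> 0 \<notin> residue_pair n q) \<and>
     (\<forall>q\<in>Q. \<forall>q'\<in>Q. q \<noteq> q' \<longrightarrow> residue_pair n q \<inter> residue_pair n q' = {})"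

lemma card_cyclic_pair:
  "0 < n \<Longrightarrow> card (cyclic_pair n p q) = card (residue_pair n q)"
  by (simp add: cyclic_pair_def residue_pair_def card_insert_if modidx_shift_eq_iff)

lemma cyclic_pair_subset: "0 < n \<Longrightarrow> cyclic_pair n p q \<subseteq> {1..n}"
  unfolding cyclic_pair_def using modidx_in_range by blast

lemma self_in_cyclic_pair_iff:
  assumes "p \<in> {1..n}"
  shows "p \<in> cyclic_pair n p q \<longleftrightarrow> 0 \<in> residue_pair n q"
proof -
  have "p \<in> cyclic_pair n p q \<longleftrightarrow> modidx n (int p + fst q) = p \<or> modidx n (int p + snd q) = p"
    unfolding cyclic_pair_def by auto
  then show ?thesis
    unfolding residue_pair_def using modidx_shift_eq_self_iff[OF assms] by auto
qed

lemma separated_offsets_cyclic_pair: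
  assumes "separated_offsets n Q" "p \<in> {1..n}" "q \<in> Q"
  shows "card (cyclic_pair n p q) = 2" "p \<notin> cyclic_pair n p q"
  using assms card_cyclic_pair[of n p q] self_in_cyclic_pair_iff[OF assms(2)]
  unfolding separated_offsets_def by auto

lemma separated_offsets_cyclic_pair_disjoint:
  assumes "separated_offsets n Q" "0 < n" "q \<in> Q" "q' \<in> Q" "q \<noteq> q'"
  shows "cyclic_pair n p q \<inter> cyclic_pair n p q' = {}"
  using assms unfolding separated_offsets_def cyclic_pair_def residue_pair_def
  by (auto simp: modidx_shift_eq_iff)

lemma pair_sum_code_shifted_entry:
  assumes code: "pair_sum_code n N off enc" and "r \<in> {2..N}" "0 < n"
  shows "enc (modidx n (int p + a)) r x =
    x (modidx n (int p + (a + fst (off r)))) + x (modidx n (int p + (a + fst (off r) + snd (off r))))"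
  using code assms(2) modidx_modidx_add[OF assms(3), of "int p + a"]
  unfolding pair_sum_code_def by (simp add: add.assoc)

lemma pair_sum_code_recovers_from_cyclic_pair:
  fixes enc :: "nat \<Rightarrow> nat \<Rightarrow> (nat \<Rightarrow> 'a::field) \<Rightarrow> 'a"
  assumes code: "pair_sum_code n N off enc" and p: "p \<in> {1..n}"
    and q: "q \<in> recovery_offsets (off ` {2..N})" and card_q: "card (residue_pair n q) = 2"
  shows "recovers (\<lambda>_. N) enc (cyclic_pair n p q) p"
proof -
  have n: "0 < n" using p by simp
  obtain r where r: "r \<in> {2..N}"
    and "q = (- fst (off r), snd (off r)) \<or> q = (- fst (off r) - snd (off r), - snd (off r))"
    using q unfolding recovery_offsets_def by (auto simp: case_prod_beta)
  moreover obtain s d where off_r: "off r = (s, d)"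
    by fastforce
  ultimately have q_cases: "q = (- s, d) \<or> q = (- s - d, - d)"
    by simp
  have entry: "enc (modidx n (int p + a)) r x =
      x (modidx n (int p + (a + s))) + x (modidx n (int p + (a + s + d)))" for a x
    using pair_sum_code_shifted_entry[OF code r n] off_r by simp
  have coord: "enc l 1 x = x l" for l x
    using code unfolding pair_sum_code_def by simp
  have "modidx n (int p + fst q) \<noteq> modidx n (int p + snd q)"
    using card_q card_cyclic_pair[OF n, of p q] unfolding cyclic_pair_def by auto
  moreover have "enc (modidx n (int p + fst q)) r x - enc (modidx n (int p + snd q)) 1 x = x p" for x
    using q_cases entry[of "fst q" x] coord modidx_of_nat[OF p] by auto
  moreover have "r \<in> {1..N}" "1 \<in> {1..N}"
    using r by auto
  ultimately show ?thesis
    unfolding cyclic_pair_def by (intro recovers_entry_diff[where r = r and r' = 1])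
qed

lemma pair_sum_code_linear:
  fixes enc :: "nat \<Rightarrow> nat \<Rightarrow> (nat \<Rightarrow> 'a::field) \<Rightarrow> 'a"
  assumes code: "pair_sum_code n N off enc" and "l \<in> {1..n}" "r \<in> {1..N}"
  shows "\<exists>g. \<forall>x. enc l r x = (\<Sum>i=1..n. g i * x i)"
proof (cases "r = 1")
  case True
  then show ?thesis
    using code coordinate_linear[OF \<open>l \<in> {1..n}\<close>] unfolding pair_sum_code_def by simp
next
  case False
  with \<open>r \<in> {1..N}\<close> have "r \<in> {2..N}" by simp
  have "0 < n" using \<open>l \<in> {1..n}\<close> by simp
  have "enc l r x = x (modidx n (int l + fst (off r))) + x (modidx n (int l + fst (off r) + snd (off r)))"
    for x using code \<open>r \<in> {2..N}\<close> unfolding pair_sum_code_def by blast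
  moreover have "\<exists>g. \<forall>x. x (modidx n a) + x (modidx n b) = (\<Sum>i=1..n. g i * (x i :: 'a))" for a b
    using coordinate_linear[OF modidx_in_range, of n a] coordinate_linear[OF modidx_in_range, of n b]
      \<open>0 < n\<close> by (intro linear_add) simp_all
  ultimately show ?thesis by simp
qed

lemma double_le_add_if_le_mult:
  fixes k P d m :: nat
  assumes "(2 * k - P - 1)^2 < 4 * k" "k \<le> d * m"
  shows "2 * k \<le> P + d + m"
proof (rule ccontr)
  assume "\<not> ?thesis"
  then have "d + m \<le> 2 * k - P - 1"
    by linarith
  then have "(d + m)^2 < 4 * k"
    using assms(1) power_mono[of "d + m" "2 * k - P - 1" 2] by linarith
  moreover have "4 * (d * m) \<le> (d + m)^2"
  proof -
    have "0 \<le> (int d - int m)^2" by simp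
    then have "int (4 * (d * m)) \<le> int ((d + m)^2)"
      by (simp add: power2_eq_square algebra_simps)
    then show ?thesis by linarith
  qed
  ultimately show False
    using assms(2) by linarith
qed

lemma pair_sum_code_recovers_serving_set:
  fixes enc :: "nat \<Rightarrow> nat \<Rightarrow> (nat \<Rightarrow> 'a::field) \<Rightarrow> 'a"
  assumes code: "pair_sum_code n N off enc" and "1 \<le> N" and p: "p \<in> {1..n}"
    and sep: "separated_offsets n (recovery_offsets (off ` {2..N}))"
    and T: "T = {p} \<or> (\<exists>q\<in>recovery_offsets (off ` {2..N}). T = cyclic_pair n p q)"
  shows "T \<subseteq> {1..n} \<and> recovers (\<lambda>_. N) enc T p"
  using T
proof
  assume "T = {p}"
  moreover have "enc p 1 x = x p" for x
    using code unfolding pair_sum_code_def by simp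
  ultimately show ?thesis
    using p \<open>1 \<le> N\<close> by (auto intro: recovers_entry)
next
  assume "\<exists>q\<in>recovery_offsets (off ` {2..N}). T = cyclic_pair n p q"
  then obtain q where q: "q \<in> recovery_offsets (off ` {2..N})" "T = cyclic_pair n p q"
    by blast
  moreover have "card (residue_pair n q) = 2"
    using sep q(1) unfolding separated_offsets_def by blast
  moreover have "0 < n" using p by simp
  ultimately show ?thesis
    using cyclic_pair_subset pair_sum_code_recovers_from_cyclic_pair[OF code p] by simp
qed

lemma pair_sum_code_serves:
  fixes enc :: "nat \<Rightarrow> nat \<Rightarrow> (nat \<Rightarrow> 'a::field) \<Rightarrow> 'a"
    and off :: "nat \<Rightarrow> int \<times> int" and n N :: nat and xs :: "nat list"
  defines "Q \<equiv> recovery_offsets (off ` {2..N})"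
  assumes code: "pair_sum_code n N off enc" and "0 < n" "1 \<le> N" "set xs \<subseteq> {1..n}"
    and sep: "separated_offsets n Q" and count: "(2 * length xs - card Q - 1)^2 < 4 * length xs"
  shows "\<exists>S. (\<forall>j<length xs. S j \<subseteq> {1..n} \<and> recovers (\<lambda>_. N) enc (S j) (xs ! j)) \<and>
    (\<forall>j<length xs. \<forall>j'<length xs. j \<noteq> j' \<longrightarrow> S j \<inter> S j' = {})"
proof -
  have p_range: "p \<in> {1..n}" if "p \<in> set xs" for p
    using assms(5) that by blast
  have "finite Q"
    unfolding Q_def recovery_offsets_def by simp
  moreover have "card (cyclic_pair n p q) = 2 \<and> p \<notin> cyclic_pair n p q" if "p \<in> set xs" "q \<in> Q" for p q
    using separated_offsets_cyclic_pair[OF sep p_range[OF that(1)] that(2)] by simp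
  moreover have "cyclic_pair n p q \<inter> cyclic_pair n p q' = {}"
    if "p \<in> set xs" "q \<in> Q" "q' \<in> Q" "q \<noteq> q'" for p q q'
    using separated_offsets_cyclic_pair_disjoint[OF sep \<open>0 < n\<close> that(2-4)] .
  moreover have "2 * length xs \<le> card Q + card (set xs) + Max (count_list xs ` set xs)"
    using double_le_add_if_le_mult[OF count length_le_card_set_mult_Max_count] .
  ultimately obtain S where S: "\<forall>j<length xs. S j = {xs ! j} \<or> (\<exists>q\<in>Q. S j = cyclic_pair n (xs ! j) q)"
    and S_disj: "\<forall>j<length xs. \<forall>j'<length xs. j \<noteq> j' \<longrightarrow> S j \<inter> S j' = {}"
    using exists_disjoint_serving_sets[of Q xs "cyclic_pair n"] by blast
  have "S j \<subseteq> {1..n} \<and> recovers (\<lambda>_. N) enc (S j) (xs ! j)" if "j < length xs" for j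
  proof -
    have "S j = {xs ! j} \<or> (\<exists>q\<in>recovery_offsets (off ` {2..N}). S j = cyclic_pair n (xs ! j) q)"
      using S that unfolding Q_def by blast
    from pair_sum_code_recovers_serving_set[OF code \<open>1 \<le> N\<close> p_range[OF nth_mem[OF that]]
        sep[unfolded Q_def] this]
    show ?thesis .
  qed
  then show ?thesis
    using S_disj by blast
qed

theorem pair_sum_code_is_BAC:
  fixes enc :: "nat \<Rightarrow> nat \<Rightarrow> (nat \<Rightarrow> 'a::field) \<Rightarrow> 'a"
    and off :: "nat \<Rightarrow> int \<times> int" and n N k :: nat
  defines "Q \<equiv> recovery_offsets (off ` {2..N})"
  assumes code: "pair_sum_code n N off enc" and "0 < n" "1 \<le> N" "0 < k"
    and sep: "separated_offsets n Q" and count: "(2 * k - card Q - 1)^2 < 4 * k"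
  shows "is_BAC n (n * N) k n (\<lambda>_. N) enc"
proof (rule is_BAC_intro)
  show "\<forall>l\<in>{1..n}. \<forall>r\<in>{1..N}. \<exists>g. \<forall>x. enc l r x = (\<Sum>i=1..n. g i * x i)"
    using pair_sum_code_linear[OF code] by blast
  show "\<exists>S. (\<forall>j<k. S j \<subseteq> {1..n} \<and> recovers (\<lambda>_. N) enc (S j) (xs ! j)) \<and>
      (\<forall>j<k. \<forall>j'<k. j \<noteq> j' \<longrightarrow> S j \<inter> S j' = {})"
    if "length xs = k" "set xs \<subseteq> {1..n}" for xs
    using pair_sum_code_serves[OF code \<open>0 < n\<close> \<open>1 \<le> N\<close> that(2)] sep count
    unfolding Q_def that(1) by blast
qed (use \<open>1 \<le> N\<close> \<open>0 < k\<close> in simp_all)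

lemma code5_pair_sum_code: "pair_sum_code 5 2 (\<lambda>_. (2, 1)) code5"
  unfolding pair_sum_code_def code5_def by (simp add: add.assoc)

lemma constrC_pair_sum_code:
  "pair_sum_code n (t + 1) (\<lambda>r. (- int t - int (jv v (r - 1)), int (r - 1))) (constrC n t v)"
  unfolding pair_sum_code_def constrC_def Let_def by (simp add: algebra_simps)

lemma recovery_offsets_code5: "recovery_offsets ((\<lambda>_. (2, 1)) ` {2..2::nat}) = {(-2, 1), (-3, -1)}"
  by (auto simp: recovery_offsets_def)

lemma jv_good_vector:
  "jv [2,3,2,4,3,1,1,4] 1 = 7" "jv [2,3,2,4,3,1,1,4] 2 = 3"
  "jv [2,3,2,4,3,1,1,4] 3 = 5" "jv [2,3,2,4,3,1,1,4] 4 = 8"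
  by code_simp+

lemma recovery_offsets_good_vector:
  "recovery_offsets ((\<lambda>r. (- 4 - int (jv [2,3,2,4,3,1,1,4] (r - 1)), int (r - 1))) ` {2..5::nat}) =
    {(11, 1), (10, -1), (7, 2), (5, -2), (9, 3), (6, -3), (12, 4), (8, -4)}"
proof -
  have "{2..5::nat} = {2, 3, 4, 5}"
    by auto
  \<comment> \<open>\<open>simplified\<close> turns the list entries \<open>1\<close> into the simp normal form \<open>Suc 0\<close>\<close>
  then show ?thesis
    by (simp add: recovery_offsets_def jv_good_vector[simplified] insert_commute)
qed

theorem corollary4p8:
  shows "is_BAC 5 10 3 5 (\<lambda>_. 2) (code5 :: nat \<Rightarrow> nat \<Rightarrow> (nat \<Rightarrow> 'a::{field,finite}) \<Rightarrow> 'a)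
       \<and> is_BAC 17 85 7 17 (\<lambda>_. 5)
           (constrC 17 4 [2,3,2,4,3,1,1,4] :: nat \<Rightarrow> nat \<Rightarrow> (nat \<Rightarrow> 'a) \<Rightarrow> 'a)"
proof
  show "is_BAC 5 10 3 5 (\<lambda>_. 2) (code5 :: nat \<Rightarrow> nat \<Rightarrow> (nat \<Rightarrow> 'a) \<Rightarrow> 'a)"
    using pair_sum_code_is_BAC[OF code5_pair_sum_code, where k = 3] recovery_offsets_code5
    by (simp add: separated_offsets_def residue_pair_def card_insert_if)
  show "is_BAC 17 85 7 17 (\<lambda>_. 5) (constrC 17 4 [2,3,2,4,3,1,1,4] :: nat \<Rightarrow> nat \<Rightarrow> (nat \<Rightarrow> 'a) \<Rightarrow> 'a)"
    using pair_sum_code_is_BAC[OF constrC_pair_sum_code[of 17 4 "[2,3,2,4,3,1,1,4]"], where k = 7]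
      recovery_offsets_good_vector
    by (simp add: separated_offsets_def residue_pair_def card_insert_if)
qed

end
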